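(* Let $X$ be a cubic vertex-transitive graph for which $1$ is a simple eigenvalue, with $\pm1$ eigenvector $\mathbf{z}$ for $1$, $V^+=\{x\mid\mathbf{z}(x)=1\}$, $V^-=\{x\mid\mathbf{z}(x)=-1\}$, where $X[V^+]$ is a disjoint union of cycles $C_1,\dots,C_m$ and $X[V^-]$ a disjoint union of cycles $D_1,\dots,D_m$, all of length $k$. Let $\Gamma\le\mathrm{Aut}(X)$ act transitively on $V(X)$, and assume (A1): the stabilizer of $C_1$ in $\Gamma$ acts regularly on the vertex set of $C_1$. Write $C_1=v_1v_2\cdots v_k$ and let $D_1=w_1w_2\cdots w_k$ be the cycle of $X[V^-]$ with $v_1w_1\in E(X)$; let $\gamma_1\in\Gamma$ satisfy $\gamma_1(v_j)=v_{j+1}$ for all $j$ (indices mod $k$) and let $\delta_1\in\Gamma$ satisfy $\delta_1(v_j)=w_j$ for all $j$ (the labelling of $D_1$ being chosen so that such $\delta_1$ exists). Then $\Gamma$ acts regularly on $V(X)$, and hence $X$ is a Cayley graph of the group generated by $\gamma_1$ and the involution $\delta_1$.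
   Context: A group acts regularly on a set if it acts transitively and only the identity fixes a point. $X[W]$ denotes the induced subgraph on $W$. Eigenvalues are those of the adjacency matrix; simple means the eigenspace is $1$-dimensional. *)

theory Defs
  imports "HOL-Algebra.Algebra"
begin

definition simple_graph :: "'a set \<Rightarrow> ('a \<Rightarrow> 'a \<Rightarrow> bool) \<Rightarrow> bool" where
  "simple_graph V E \<longleftrightarrow> finite V \<and> (\<forall>x y. E x y \<longrightarrow> x \<in> V \<and> y \<in> V)
     \<and> (\<forall>x y. E x y \<longrightarrow> E y x) \<and> (\<forall>x. \<not> E x x)"

definition nbrs :: "'a set \<Rightarrow> ('a \<Rightarrow> 'a \<Rightarrow> bool) \<Rightarrow> 'a \<Rightarrow> 'a set" where
  "nbrs V E x = {y \<in> V. E x y}"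

definition cubic :: "'a set \<Rightarrow> ('a \<Rightarrow> 'a \<Rightarrow> bool) \<Rightarrow> bool" where
  "cubic V E \<longleftrightarrow> (\<forall>x\<in>V. card (nbrs V E x) = 3)"

definition graph_aut :: "'a set \<Rightarrow> ('a \<Rightarrow> 'a \<Rightarrow> bool) \<Rightarrow> ('a \<Rightarrow> 'a) \<Rightarrow> bool" where
  "graph_aut V E g \<longleftrightarrow> g \<in> Bij V \<and> (\<forall>x\<in>V. \<forall>y\<in>V. E x y \<longleftrightarrow> E (g x) (g y))"

definition vertex_transitive :: "'a set \<Rightarrow> ('a \<Rightarrow> 'a \<Rightarrow> bool) \<Rightarrow> bool" where
  "vertex_transitive V E \<longleftrightarrow> (\<forall>x\<in>V. \<forall>y\<in>V. \<exists>g. graph_aut V E g \<and> g x = y)"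

definition eigenspace :: "'a set \<Rightarrow> ('a \<Rightarrow> 'a \<Rightarrow> bool) \<Rightarrow> real \<Rightarrow> ('a \<Rightarrow> real) set" where
  "eigenspace V E lam = {f. (\<forall>x. x \<notin> V \<longrightarrow> f x = 0) \<and>
       (\<forall>x\<in>V. (\<Sum>y\<in>nbrs V E x. f y) = lam * f x)}"

definition simple_eigenvalue :: "'a set \<Rightarrow> ('a \<Rightarrow> 'a \<Rightarrow> bool) \<Rightarrow> real \<Rightarrow> bool" where
  "simple_eigenvalue V E lam \<longleftrightarrow>
     (\<exists>z. z \<noteq> (\<lambda>_. 0) \<and> eigenspace V E lam = {(\<lambda>x. c * z x) | c. True})"

definition is_cycle :: "'a set \<Rightarrow> ('a \<Rightarrow> 'a \<Rightarrow> bool) \<Rightarrow> nat \<Rightarrow> (nat \<Rightarrow> 'a) \<Rightarrow> bool" where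
  "is_cycle V E k c \<longleftrightarrow> 3 \<le> k \<and> inj_on c {..<k} \<and> c ` {..<k} \<subseteq> V \<and>
     (\<forall>i<k. E (c i) (c (Suc i mod k)))"

definition induced_cycle_union ::
  "'a set \<Rightarrow> ('a \<Rightarrow> 'a \<Rightarrow> bool) \<Rightarrow> 'a set \<Rightarrow> nat \<Rightarrow> nat \<Rightarrow> (nat \<Rightarrow> nat \<Rightarrow> 'a) \<Rightarrow> bool" where
  "induced_cycle_union V E W k m Cs \<longleftrightarrow>
     (\<forall>i<m. is_cycle V E k (Cs i)) \<and>
     (\<forall>i<m. \<forall>j<m. i \<noteq> j \<longrightarrow> Cs i ` {..<k} \<inter> Cs j ` {..<k} = {}) \<and>
     (\<Union>i<m. Cs i ` {..<k}) = W \<and>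
     (\<forall>x\<in>W. \<forall>y\<in>W. E x y \<longleftrightarrow>
        (\<exists>i<m. \<exists>j<k. {x, y} = {Cs i j, Cs i (Suc j mod k)}))"

definition acts_transitively_on :: "('a \<Rightarrow> 'a) set \<Rightarrow> 'a set \<Rightarrow> bool" where
  "acts_transitively_on H B \<longleftrightarrow> (\<forall>x\<in>B. \<forall>y\<in>B. \<exists>g\<in>H. g x = y)"

definition acts_regularly_on :: "'a set \<Rightarrow> ('a \<Rightarrow> 'a) set \<Rightarrow> 'a set \<Rightarrow> bool" where
  "acts_regularly_on V H B \<longleftrightarrow> acts_transitively_on H B \<and>
     (\<forall>g\<in>H. (\<exists>x\<in>B. g x = x) \<longrightarrow> g = \<one>\<^bsub>BijGroup V\<^esub>)"

definition set_stabilizer :: "('a \<Rightarrow> 'a) set \<Rightarrow> 'a set \<Rightarrow> ('a \<Rightarrow> 'a) set" where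
  "set_stabilizer H B = {g \<in> H. g ` B = B}"

definition is_cayley_graph_of ::
  "'a set \<Rightarrow> ('a \<Rightarrow> 'a \<Rightarrow> bool) \<Rightarrow> ('b, 'c) monoid_scheme \<Rightarrow> bool" where
  "is_cayley_graph_of V E G \<longleftrightarrow> group G \<and>
     (\<exists>S \<phi>. S \<subseteq> carrier G \<and> \<one>\<^bsub>G\<^esub> \<notin> S \<and> (\<forall>s\<in>S. inv\<^bsub>G\<^esub> s \<in> S) \<and>
        bij_betw \<phi> (carrier G) V \<and>
        (\<forall>g\<in>carrier G. \<forall>h\<in>carrier G. E (\<phi> g) (\<phi> h) \<longleftrightarrow> inv\<^bsub>G\<^esub> g \<otimes>\<^bsub>G\<^esub> h \<in> S))"

end

theory Submission
  imports Defs
begin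

text \<open>For an automorphism \<open>g\<close>, \<open>z \<circ> g\<close> is again an eigenvector for 1, hence equals
  \<open>\<plusminus>z\<close> because 1 is simple. An element of \<open>\<Gamma>\<close> fixing \<open>v\<^sub>1\<close> therefore preserves \<open>V\<^sup>+\<close>,
  hence the component \<open>C\<^sub>1\<close> of \<open>X[V\<^sup>+]\<close>, and is trivial by (A1); together with transitivity
  this makes \<open>\<Gamma>\<close> regular. Since the neighbour sum of \<open>z\<close> at \<open>w\<^sub>1\<close> is \<open>-1\<close>, the vertex
  \<open>w\<^sub>1\<close> has exactly one neighbour in \<open>V\<^sup>+\<close>; as \<open>\<delta>\<^sub>1\<close> reverses the sign of \<open>z\<close>, it swaps
  \<open>v\<^sub>1\<close> and \<open>w\<^sub>1\<close>, so \<open>\<delta>\<^sub>1\<^sup>2 = 1\<close>. The neighbours of \<open>v\<^sub>1\<close> are \<open>\<gamma>\<^sub>1 v\<^sub>1\<close>, \<open>\<gamma>\<^sub>1\<^sup>-\<^sup>1 v\<^sub>1\<close>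
  and \<open>\<delta>\<^sub>1 v\<^sub>1\<close>, so the orbit of \<open>v\<^sub>1\<close> under \<open>H = \<langle>\<gamma>\<^sub>1, \<delta>\<^sub>1\<rangle>\<close> is closed under adjacency.
  Cutting \<open>z\<close> off outside that orbit gives another eigenvector for 1, so by simplicity the
  orbit is all of \<open>V\<close>; the regular subgroup \<open>H\<close> then identifies \<open>X\<close> with a Cayley graph of \<open>H\<close>.\<close>

lemma carrier_BijGroup [simp]: "carrier (BijGroup V) = Bij V"
  by (simp add: BijGroup_def)

lemma Bij_apply_mem: "g \<in> Bij V \<Longrightarrow> x \<in> V \<Longrightarrow> g x \<in> V"
  using Bij_imp_funcset by blast

lemma BijGroup_mult_apply:
  "a \<in> Bij V \<Longrightarrow> b \<in> Bij V \<Longrightarrow> x \<in> V \<Longrightarrow> (a \<otimes>\<^bsub>BijGroup V\<^esub> b) x = a (b x)"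
  by (simp add: BijGroup_def compose_def)

lemma BijGroup_one_apply: "x \<in> V \<Longrightarrow> \<one>\<^bsub>BijGroup V\<^esub> x = x"
  by (simp add: BijGroup_def)

lemma BijGroup_inv_apply: "g \<in> Bij V \<Longrightarrow> x \<in> V \<Longrightarrow> (inv\<^bsub>BijGroup V\<^esub> g) (g x) = x"
  by (auto simp: inv_BijGroup Bij_def bij_betw_def)

lemma BijGroup_apply_inv: "g \<in> Bij V \<Longrightarrow> x \<in> V \<Longrightarrow> g ((inv\<^bsub>BijGroup V\<^esub> g) x) = x"
  by (auto simp: inv_BijGroup Bij_def bij_betw_def f_inv_into_f)

lemma graph_aut_nbrs:
  assumes "graph_aut V E g" "x \<in> V"
  shows "nbrs V E (g x) = g ` nbrs V E x"
proof -
  have gV: "g ` V = V" and adj: "\<forall>x\<in>V. \<forall>y\<in>V. E x y \<longleftrightarrow> E (g x) (g y)"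
    using assms(1) by (auto simp: graph_aut_def Bij_def bij_betw_def)
  show ?thesis
  proof (intro equalityI subsetI)
    fix y assume "y \<in> nbrs V E (g x)"
    then have "y \<in> V" "E (g x) y" by (auto simp: nbrs_def)
    moreover obtain u where "u \<in> V" "y = g u"
      using \<open>y \<in> V\<close> gV by blast
    ultimately show "y \<in> g ` nbrs V E x"
      using adj assms(2) by (auto simp: nbrs_def)
  qed (use adj assms(2) gV in \<open>auto simp: nbrs_def\<close>)
qed

lemma eigenspace_comp_graph_aut:
  assumes g: "graph_aut V E g" and f: "f \<in> eigenspace V E lam"
  shows "(\<lambda>x. if x \<in> V then f (g x) else 0) \<in> eigenspace V E lam"
proof -
  have gV: "\<And>x. x \<in> V \<Longrightarrow> g x \<in> V" and inj: "inj_on g V"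
    using g by (auto simp: graph_aut_def Bij_def bij_betw_def)
  have "(\<Sum>y\<in>nbrs V E x. if y \<in> V then f (g y) else 0) = lam * f (g x)" if x: "x \<in> V" for x
  proof -
    have "(\<Sum>y\<in>nbrs V E x. if y \<in> V then f (g y) else 0) = (\<Sum>y\<in>nbrs V E x. f (g y))"
      by (rule sum.cong) (auto simp: nbrs_def)
    also have "\<dots> = (\<Sum>y\<in>g ` nbrs V E x. f y)"
      using inj by (simp add: sum.reindex inj_on_subset[of g V] nbrs_def)
    also have "\<dots> = lam * f (g x)"
      using f x gV by (simp add: eigenspace_def graph_aut_nbrs[OF g x, symmetric])
    finally show ?thesis .
  qed
  then show ?thesis by (simp add: eigenspace_def)
qed

lemma simple_eigenvalue_proportional:
  assumes "simple_eigenvalue V E lam" "z \<in> eigenspace V E lam" "f \<in> eigenspace V E lam"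
  shows "f x * z v = f v * z x"
proof -
  obtain z0 where "eigenspace V E lam = {(\<lambda>x. c * z0 x) | c. True}"
    using assms(1) by (auto simp: simple_eigenvalue_def)
  then obtain a b where "z = (\<lambda>x. a * z0 x)" "f = (\<lambda>x. b * z0 x)"
    using assms(2,3) by auto
  then show ?thesis by simp
qed

lemma simple_eigenvalue_comp_graph_aut:
  assumes "simple_eigenvalue V E lam" "z \<in> eigenspace V E lam" "graph_aut V E g"
    and "x \<in> V" "v \<in> V"
  shows "z (g x) * z v = z (g v) * z x"
  using simple_eigenvalue_proportional[OF assms(1,2) eigenspace_comp_graph_aut[OF assms(3,2)], of x v]
    assms(4,5) by simp

lemma eigenspace_restrict_closed:
  assumes G: "simple_graph V E" and f: "f \<in> eigenspace V E lam"
    and UV: "U \<subseteq> V" and closed: "\<And>x y. x \<in> U \<Longrightarrow> E x y \<Longrightarrow> y \<in> U"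
  shows "(\<lambda>x. if x \<in> U then f x else 0) \<in> eigenspace V E lam"
proof -
  have sym: "\<And>x y. E x y \<Longrightarrow> E y x" using G by (simp add: simple_graph_def)
  have "(\<Sum>y\<in>nbrs V E x. if y \<in> U then f y else 0) = lam * (if x \<in> U then f x else 0)"
    if x: "x \<in> V" for x
  proof (cases "x \<in> U")
    case True
    then have "(\<Sum>y\<in>nbrs V E x. if y \<in> U then f y else 0) = (\<Sum>y\<in>nbrs V E x. f y)"
      by (intro sum.cong) (auto simp: nbrs_def closed)
    with True f x show ?thesis by (simp add: eigenspace_def)
  next
    case False
    then have "(\<Sum>y\<in>nbrs V E x. if y \<in> U then f y else 0) = 0"
      by (intro sum.neutral) (auto simp: nbrs_def dest: sym closed)
    with False show ?thesis by simp
  qed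
  with UV f show ?thesis by (auto simp: eigenspace_def)
qed

lemma simple_eigenvalue_closed_set_eq:
  assumes "simple_eigenvalue V E lam" "simple_graph V E" "z \<in> eigenspace V E lam"
    and nonzero: "\<forall>x\<in>V. z x \<noteq> 0"
    and UV: "U \<subseteq> V" and v: "v \<in> U" and closed: "\<And>x y. x \<in> U \<Longrightarrow> E x y \<Longrightarrow> y \<in> U"
  shows "U = V"
proof (rule ccontr)
  assume "U \<noteq> V"
  with UV obtain x where x: "x \<in> V" "x \<notin> U" by blast
  have "(\<lambda>x. if x \<in> U then z x else 0) \<in> eigenspace V E lam"
    using eigenspace_restrict_closed[OF assms(2,3) UV closed] .
  from simple_eigenvalue_proportional[OF assms(1,3) this, of x v]
  have "z v * z x = 0" using x v by simp
  with nonzero x v UV show False by auto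
qed

lemma card_nbrs_opposite_sign:
  assumes "cubic V E" "simple_graph V E" "z \<in> eigenspace V E 1"
    and pm: "\<forall>x\<in>V. z x = 1 \<or> z x = -1" and x: "x \<in> V" "z x = -1"
  shows "card {y\<in>nbrs V E x. z y = 1} = 1"
proof -
  define N where "N = nbrs V E x"
  define P where "P = {y\<in>N. z y = 1}"
  define M where "M = {y\<in>N. z y \<noteq> 1}"
  have fin: "finite P" "finite M" using assms(2) by (auto simp: simple_graph_def nbrs_def N_def P_def M_def)
  have split: "N = P \<union> M" "P \<inter> M = {}" by (auto simp: P_def M_def)
  have "sum z M = (\<Sum>y\<in>M. -1)"
    using pm by (intro sum.cong) (auto simp: M_def N_def nbrs_def)
  moreover have "sum z P = real (card P)" by (simp add: P_def)
  ultimately have "sum z N = real (card P) - real (card M)"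
    using split fin by (simp add: sum.union_disjoint)
  moreover have "sum z N = -1" using assms(3) x by (simp add: eigenspace_def N_def)
  moreover have "card P + card M = 3"
    using assms(1) x split fin by (metis card_Un_disjoint cubic_def N_def)
  ultimately show ?thesis by (simp add: P_def N_def)
qed

lemma induced_cycle_union_subset:
  "induced_cycle_union V E W k m Cs \<Longrightarrow> i < m \<Longrightarrow> Cs i ` {..<k} \<subseteq> W"
  by (auto simp: induced_cycle_union_def)

lemma induced_cycle_union_adjacent:
  assumes icu: "induced_cycle_union V E W k m Cs" and i: "i < m"
    and x: "x \<in> Cs i ` {..<k}" and y: "y \<in> W" and xy: "E x y"
  shows "y \<in> Cs i ` {..<k}"
proof -
  have disj: "\<And>i j. i < m \<Longrightarrow> j < m \<Longrightarrow> i \<noteq> j \<Longrightarrow> Cs i ` {..<k} \<inter> Cs j ` {..<k} = {}"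
    and edges: "\<forall>x\<in>W. \<forall>y\<in>W. E x y \<longleftrightarrow> (\<exists>i<m. \<exists>j<k. {x, y} = {Cs i j, Cs i (Suc j mod k)})"
    using icu by (simp_all add: induced_cycle_union_def)
  have "x \<in> W" using induced_cycle_union_subset[OF icu i] x ..
  with edges y xy obtain i' j where i': "i' < m" "j < k" "{x, y} = {Cs i' j, Cs i' (Suc j mod k)}"
    by blast
  then have "x \<in> Cs i' ` {..<k}" "y \<in> Cs i' ` {..<k}"
    by (auto simp: doubleton_eq_iff)
  moreover from this(1) have "i' = i" using disj[OF i'(1) i] x by blast
  ultimately show ?thesis by simp
qed

lemma graph_aut_stabilizes_cycle:
  assumes icu: "induced_cycle_union V E W k m Cs" and i: "i < m"
    and g: "graph_aut V E g" and gW: "g ` W \<subseteq> W" and start: "g (Cs i 0) \<in> Cs i ` {..<k}"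
  shows "g ` Cs i ` {..<k} = Cs i ` {..<k}"
proof -
  have cyc: "is_cycle V E k (Cs i)" using icu i by (simp add: induced_cycle_union_def)
  have CW: "Cs i ` {..<k} \<subseteq> W" using induced_cycle_union_subset[OF icu i] .
  have CV: "Cs i ` {..<k} \<subseteq> V" using cyc by (simp add: is_cycle_def)
  have "g (Cs i j) \<in> Cs i ` {..<k}" if "j < k" for j
    using that
  proof (induction j)
    case 0
    then show ?case using start by simp
  next
    case (Suc j)
    then have "E (Cs i j) (Cs i (Suc j))"
      using cyc unfolding is_cycle_def by (metis Suc_lessD mod_less)
    then have "E (g (Cs i j)) (g (Cs i (Suc j)))"
      using g CV Suc.prems by (simp add: graph_aut_def image_subset_iff)
    moreover have "g (Cs i (Suc j)) \<in> W" using gW CW Suc.prems by blast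
    ultimately show ?case
      using induced_cycle_union_adjacent[OF icu i] Suc by simp
  qed
  moreover have "inj_on g (Cs i ` {..<k})"
    using g CV by (auto simp: graph_aut_def Bij_def bij_betw_def intro: inj_on_subset)
  ultimately show ?thesis by (intro endo_inj_surj) auto
qed

lemma nbrs_cycle_start:
  assumes "cubic V E" "simple_graph V E" and cyc: "is_cycle V E k c"
    and x: "E (c 0) x" "x \<notin> c ` {..<k}"
  shows "nbrs V E (c 0) = {c 1, c (k - 1), x}"
proof -
  have k: "3 \<le> k" "inj_on c {..<k}" "c ` {..<k} \<subseteq> V" "\<forall>i<k. E (c i) (c (Suc i mod k))"
    using cyc by (auto simp: is_cycle_def)
  have E: "\<And>x y. E x y \<Longrightarrow> x \<in> V \<and> y \<in> V \<and> E y x"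
    using assms(2) by (simp add: simple_graph_def)
  have "E (c 0) (c 1)" using k(4)[rule_format, of 0] k(1) by simp
  moreover have "E (c 0) (c (k - 1))" using k(4)[rule_format, of "k - 1"] k(1) E by simp
  moreover have "c 1 \<noteq> c (k - 1)" using inj_onD[OF k(2), of 1 "k - 1"] k(1) by auto
  moreover have "c 1 \<noteq> x" "c (k - 1) \<noteq> x" using x(2) k(1) by auto
  ultimately have sub: "{c 1, c (k - 1), x} \<subseteq> nbrs V E (c 0)" and
    three: "card {c 1, c (k - 1), x} = 3"
    using E x(1) by (auto simp: nbrs_def)
  have "finite (nbrs V E (c 0))" using assms(2) by (simp add: simple_graph_def nbrs_def)
  moreover have "card (nbrs V E (c 0)) = 3" using assms(1) E x(1) by (simp add: cubic_def)
  ultimately show ?thesis using card_subset_eq[OF _ sub] three by simp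
qed

lemma nbrs_cycle_start_subset_orbit:
  assumes "cubic V E" "simple_graph V E" and cyc: "is_cycle V E k c"
    and x: "E (c 0) x" "x \<notin> c ` {..<k}"
    and sub: "subgroup H (BijGroup V)" and \<gamma>: "\<gamma> \<in> H" "\<forall>j<k. \<gamma> (c j) = c (Suc j mod k)"
    and \<delta>: "\<delta> \<in> H" "\<delta> (c 0) = x"
  shows "nbrs V E (c 0) \<subseteq> (\<lambda>h. h (c 0)) ` H"
proof -
  have k: "3 \<le> k" "c ` {..<k} \<subseteq> V" using cyc by (auto simp: is_cycle_def)
  have "\<gamma> (c 0) = c 1" using \<gamma>(2) k(1) by simp
  moreover have "(inv\<^bsub>BijGroup V\<^esub> \<gamma>) (c 0) = c (k - 1)"
  proof -
    have "\<gamma> (c (k - 1)) = c 0" using \<gamma>(2)[rule_format, of "k - 1"] k(1) by simp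
    moreover have "\<gamma> \<in> Bij V" using subgroup.subset[OF sub] \<gamma>(1) by auto
    moreover have "c (k - 1) \<in> V" using k by auto
    ultimately show ?thesis using BijGroup_inv_apply by metis
  qed
  ultimately have "nbrs V E (c 0) = (\<lambda>h. h (c 0)) ` {\<gamma>, inv\<^bsub>BijGroup V\<^esub> \<gamma>, \<delta>}"
    using nbrs_cycle_start[OF assms(1-5)] \<delta>(2) by simp
  then show ?thesis using \<gamma>(1) \<delta>(1) subgroup.m_inv_closed[OF sub \<gamma>(1)] by auto
qed

lemma acts_regularly_of_trivial_stabilizer:
  assumes sub: "subgroup \<Gamma> (BijGroup V)" and trans: "acts_transitively_on \<Gamma> V"
    and v: "v \<in> V" and stab: "\<And>g. g \<in> \<Gamma> \<Longrightarrow> g v = v \<Longrightarrow> g = \<one>\<^bsub>BijGroup V\<^esub>"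
  shows "acts_regularly_on V \<Gamma> V"
  unfolding acts_regularly_on_def
proof (intro conjI trans ballI impI)
  interpret G: group "BijGroup V" by (rule group_BijGroup)
  fix g assume g: "g \<in> \<Gamma>" and "\<exists>x\<in>V. g x = x"
  then obtain t where t: "t \<in> \<Gamma>" "g (t v) = t v"
    using trans v unfolding acts_transitively_on_def by metis
  have tg: "t \<in> carrier (BijGroup V)" "g \<in> carrier (BijGroup V)"
    using subgroup.subset[OF sub] t g by auto
  have Bij: "t \<in> Bij V" "g \<in> Bij V" "inv\<^bsub>BijGroup V\<^esub> t \<in> Bij V" "g \<otimes>\<^bsub>BijGroup V\<^esub> t \<in> Bij V"
    using tg G.inv_closed[OF tg(1)] G.m_closed[OF tg(2,1)] by simp_all
  have "(inv\<^bsub>BijGroup V\<^esub> t \<otimes>\<^bsub>BijGroup V\<^esub> (g \<otimes>\<^bsub>BijGroup V\<^esub> t)) v = v"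
    using Bij v t(2) by (simp add: BijGroup_mult_apply BijGroup_inv_apply)
  then have "inv\<^bsub>BijGroup V\<^esub> t \<otimes>\<^bsub>BijGroup V\<^esub> (g \<otimes>\<^bsub>BijGroup V\<^esub> t) = \<one>\<^bsub>BijGroup V\<^esub>"
    using stab sub t g by (meson subgroup.m_closed subgroup.m_inv_closed)
  then show "g = \<one>\<^bsub>BijGroup V\<^esub>"
    using tg by (metis G.inv_solve_left G.m_closed G.one_closed G.r_cancel_one G.r_one)
qed

lemma orbit_closed_under_adjacency:
  assumes sub: "subgroup H (BijGroup V)" and aut: "\<forall>h\<in>H. graph_aut V E h"
    and G: "simple_graph V E" and v: "v \<in> V" and nbrs: "nbrs V E v \<subseteq> (\<lambda>h. h v) ` H"
    and h: "h \<in> H" and y: "E (h v) y"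
  shows "y \<in> (\<lambda>h. h v) ` H"
proof -
  have HBij: "H \<subseteq> Bij V" using subgroup.subset[OF sub] by simp
  have ih: "inv\<^bsub>BijGroup V\<^esub> h \<in> H" using subgroup.m_inv_closed[OF sub h] .
  have yV: "y \<in> V" and hv: "h v \<in> V"
    using G y by (auto simp: simple_graph_def)
  have "E ((inv\<^bsub>BijGroup V\<^esub> h) (h v)) ((inv\<^bsub>BijGroup V\<^esub> h) y)"
    using aut ih yV hv y by (simp add: graph_aut_def)
  then have "(inv\<^bsub>BijGroup V\<^esub> h) y \<in> nbrs V E v"
    using HBij h v ih yV by (auto simp: nbrs_def BijGroup_inv_apply Bij_apply_mem)
  with nbrs obtain s where s: "s \<in> H" "(inv\<^bsub>BijGroup V\<^esub> h) y = s v" by auto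
  then have "y = (h \<otimes>\<^bsub>BijGroup V\<^esub> s) v"
    using HBij h v yV by (metis BijGroup_apply_inv BijGroup_mult_apply subsetD)
  then show ?thesis using subgroup.m_closed[OF sub h s(1)] by blast
qed

lemma simple_eigenvalue_orbit_eq_vertices:
  assumes "simple_eigenvalue V E lam" "simple_graph V E" "z \<in> eigenspace V E lam"
    and "\<forall>x\<in>V. z x \<noteq> 0"
    and sub: "subgroup H (BijGroup V)" and aut: "\<forall>h\<in>H. graph_aut V E h"
    and v: "v \<in> V" and nbrs: "nbrs V E v \<subseteq> (\<lambda>h. h v) ` H"
  shows "(\<lambda>h. h v) ` H = V"
proof (rule simple_eigenvalue_closed_set_eq[OF assms(1-4)])
  show "(\<lambda>h. h v) ` H \<subseteq> V"
    using subgroup.subset[OF sub] Bij_apply_mem[OF _ v] by auto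
  show "v \<in> (\<lambda>h. h v) ` H"
  proof
    show "v = \<one>\<^bsub>BijGroup V\<^esub> v" using v by (simp add: BijGroup_one_apply)
  qed (rule subgroup.one_closed[OF sub])
next
  fix x y assume "x \<in> (\<lambda>h. h v) ` H" "E x y"
  then obtain h where "h \<in> H" "E (h v) y" by blast
  then show "y \<in> (\<lambda>h. h v) ` H" by (rule orbit_closed_under_adjacency[OF sub aut assms(2) v nbrs])
qed

lemma inj_on_orbit_map_of_trivial_stabilizer:
  assumes sub: "subgroup H (BijGroup V)" and v: "v \<in> V"
    and stab: "\<And>h. h \<in> H \<Longrightarrow> h v = v \<Longrightarrow> h = \<one>\<^bsub>BijGroup V\<^esub>"
  shows "inj_on (\<lambda>h. h v) H"
proof (rule inj_onI)
  interpret G: group "BijGroup V" by (rule group_BijGroup)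
  have HBij: "H \<subseteq> Bij V" using subgroup.subset[OF sub] by simp
  fix g h assume gh: "g \<in> H" "h \<in> H" "g v = h v"
  have ig: "inv\<^bsub>BijGroup V\<^esub> g \<in> H" using subgroup.m_inv_closed[OF sub gh(1)] .
  have Bij: "g \<in> Bij V" "h \<in> Bij V" "inv\<^bsub>BijGroup V\<^esub> g \<in> Bij V" using HBij gh ig by auto
  then have "(inv\<^bsub>BijGroup V\<^esub> g \<otimes>\<^bsub>BijGroup V\<^esub> h) v = v"
    using v by (simp add: BijGroup_inv_apply BijGroup_mult_apply flip: gh(3))
  then have "\<one>\<^bsub>BijGroup V\<^esub> = inv\<^bsub>BijGroup V\<^esub> g \<otimes>\<^bsub>BijGroup V\<^esub> h"
    using stab subgroup.m_closed[OF sub ig gh(2)] by simp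
  with Bij show "g = h"
    by (metis G.inv_solve_left G.one_closed G.r_one carrier_BijGroup)
qed

lemma is_cayley_graph_of_regular_subgroup:
  assumes sub: "subgroup H (BijGroup V)" and aut: "\<forall>h\<in>H. graph_aut V E h"
    and G: "simple_graph V E" and v: "v \<in> V" and orbit: "(\<lambda>h. h v) ` H = V"
    and stab: "\<And>h. h \<in> H \<Longrightarrow> h v = v \<Longrightarrow> h = \<one>\<^bsub>BijGroup V\<^esub>"
  shows "is_cayley_graph_of V E ((BijGroup V)\<lparr>carrier := H\<rparr>)"
proof -
  interpret G: group "BijGroup V" by (rule group_BijGroup)
  let ?H = "(BijGroup V)\<lparr>carrier := H\<rparr>"
  define S where "S = {s \<in> H. E v (s v)}"
  have HBij: "H \<subseteq> Bij V" using subgroup.subset[OF sub] by simp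
  have inv: "\<And>h. h \<in> H \<Longrightarrow> inv\<^bsub>?H\<^esub> h = inv\<^bsub>BijGroup V\<^esub> h"
    using G.m_inv_consistent[OF sub] by blast
  have apply_in: "\<And>h x. h \<in> H \<Longrightarrow> x \<in> V \<Longrightarrow> h x \<in> V"
    using HBij by (metis Bij_apply_mem subsetD)
  have adj_iff: "E (g v) (h v) \<longleftrightarrow> inv\<^bsub>?H\<^esub> g \<otimes>\<^bsub>?H\<^esub> h \<in> S" if gh: "g \<in> H" "h \<in> H" for g h
  proof -
    have ig: "inv\<^bsub>BijGroup V\<^esub> g \<in> H" using subgroup.m_inv_closed[OF sub gh(1)] .
    have "E (g v) (h v) \<longleftrightarrow> E ((inv\<^bsub>BijGroup V\<^esub> g) (g v)) ((inv\<^bsub>BijGroup V\<^esub> g) (h v))"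
      using aut ig apply_in gh v by (simp add: graph_aut_def)
    also have "\<dots> \<longleftrightarrow> E v ((inv\<^bsub>BijGroup V\<^esub> g \<otimes>\<^bsub>BijGroup V\<^esub> h) v)"
      using HBij gh ig v by (simp add: subsetD BijGroup_inv_apply BijGroup_mult_apply)
    finally show ?thesis
      using subgroup.m_closed[OF sub ig gh(2)] inv[OF gh(1)] by (simp add: S_def)
  qed
  have sym: "\<And>x y. E x y \<Longrightarrow> E y x" and irrefl: "\<And>x. \<not> E x x"
    using G by (simp_all add: simple_graph_def)
  have "inv\<^bsub>?H\<^esub> s \<in> S" if s: "s \<in> S" for s
  proof -
    have sH: "s \<in> H" and "E (s v) (\<one>\<^bsub>BijGroup V\<^esub> v)"
      using s v sym by (auto simp: S_def BijGroup_one_apply)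
    then have "inv\<^bsub>?H\<^esub> s \<otimes>\<^bsub>?H\<^esub> \<one>\<^bsub>BijGroup V\<^esub> \<in> S"
      using adj_iff subgroup.one_closed[OF sub] by blast
    then show ?thesis
      using inv[OF sH] subgroup.m_inv_closed[OF sub sH] HBij by auto
  qed
  moreover have "\<one>\<^bsub>?H\<^esub> \<notin> S" using irrefl v by (simp add: S_def BijGroup_one_apply)
  moreover have "bij_betw (\<lambda>h. h v) (carrier ?H) V"
    using inj_on_orbit_map_of_trivial_stabilizer[OF sub v stab] orbit by (simp add: bij_betw_def)
  moreover have "S \<subseteq> carrier ?H" by (auto simp: S_def)
  ultimately show ?thesis
    unfolding is_cayley_graph_of_def
    using subgroup.subgroup_is_group[OF sub group_BijGroup] adj_iff
    by (intro conjI exI[of _ S] exI[of _ "\<lambda>h. h v"]) simp_all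
qed

lemma point_stabilizer_trivial:
  assumes simple: "simple_eigenvalue V E lam" and z: "z \<in> eigenspace V E lam"
    and icu: "induced_cycle_union V E {x \<in> V. z x = 1} k m Cs" and i: "i < m"
    and aut: "\<forall>g\<in>\<Gamma>. graph_aut V E g"
    and reg: "acts_regularly_on V (set_stabilizer \<Gamma> (Cs i ` {..<k})) (Cs i ` {..<k})"
    and g: "g \<in> \<Gamma>" "g (Cs i 0) = Cs i 0"
  shows "g = \<one>\<^bsub>BijGroup V\<^esub>"
proof -
  have "is_cycle V E k (Cs i)" using icu i by (simp add: induced_cycle_union_def)
  then have v: "Cs i 0 \<in> Cs i ` {..<k}" by (simp add: is_cycle_def)
  then have vV: "Cs i 0 \<in> V" and zv: "z (Cs i 0) = 1"
    using induced_cycle_union_subset[OF icu i] by auto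
  have "z (g x) = z x" if "x \<in> V" for x
    using simple_eigenvalue_comp_graph_aut[OF simple z _ that vV] aut g zv by simp
  moreover have "g x \<in> V" if "x \<in> V" for x
    using aut g that by (auto simp: graph_aut_def Bij_def bij_betw_def)
  ultimately have "g ` {x \<in> V. z x = 1} \<subseteq> {x \<in> V. z x = 1}" by auto
  then have "g ` Cs i ` {..<k} = Cs i ` {..<k}"
    using graph_aut_stabilizes_cycle[OF icu i] aut g v by simp
  then have "g \<in> set_stabilizer \<Gamma> (Cs i ` {..<k})" using g by (simp add: set_stabilizer_def)
  with reg v g(2) show ?thesis unfolding acts_regularly_on_def by blast
qed

lemma sign_reversing_aut_involution:
  assumes cub: "cubic V E" and G: "simple_graph V E" and simple: "simple_eigenvalue V E 1"
    and z: "z \<in> eigenspace V E 1" and pm: "\<forall>x\<in>V. z x = 1 \<or> z x = -1"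
    and sub: "subgroup \<Gamma> (BijGroup V)" and aut: "\<forall>g\<in>\<Gamma>. graph_aut V E g"
    and v: "v \<in> V" "z v = 1" and stab: "\<And>g. g \<in> \<Gamma> \<Longrightarrow> g v = v \<Longrightarrow> g = \<one>\<^bsub>BijGroup V\<^esub>"
    and \<delta>: "\<delta> \<in> \<Gamma>" "E v (\<delta> v)" "z (\<delta> v) = -1"
  shows "\<delta> \<otimes>\<^bsub>BijGroup V\<^esub> \<delta> = \<one>\<^bsub>BijGroup V\<^esub> \<and> \<delta> \<noteq> \<one>\<^bsub>BijGroup V\<^esub>"
proof -
  have \<delta>Bij: "\<delta> \<in> Bij V" using subgroup.subset[OF sub] \<delta>(1) by auto
  have \<delta>v: "\<delta> v \<in> V" and adj_back: "E (\<delta> v) v" using G \<delta>(2) by (auto simp: simple_graph_def)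
  have "z (\<delta> (\<delta> v)) = 1"
    using simple_eigenvalue_comp_graph_aut[OF simple z _ \<delta>v v(1)] aut \<delta> v by simp
  moreover have "E (\<delta> v) (\<delta> (\<delta> v))"
    using aut \<delta> v(1) \<delta>v by (simp add: graph_aut_def)
  moreover have "\<delta> (\<delta> v) \<in> V" using \<delta>Bij \<delta>v by (rule Bij_apply_mem)
  ultimately have "\<delta> (\<delta> v) \<in> {y \<in> nbrs V E (\<delta> v). z y = 1}"
    and "v \<in> {y \<in> nbrs V E (\<delta> v). z y = 1}"
    using adj_back v by (simp_all add: nbrs_def)
  moreover obtain u where "{y \<in> nbrs V E (\<delta> v). z y = 1} = {u}"
    using card_nbrs_opposite_sign[OF cub G z pm \<delta>v \<delta>(3)] by (rule card_1_singletonE)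
  ultimately have "\<delta> (\<delta> v) = v" by simp
  then have "\<delta> \<otimes>\<^bsub>BijGroup V\<^esub> \<delta> = \<one>\<^bsub>BijGroup V\<^esub>"
    using stab subgroup.m_closed[OF sub \<delta>(1) \<delta>(1)] \<delta>Bij v(1) by (simp add: BijGroup_mult_apply)
  moreover have "\<delta> v \<noteq> v" using G \<delta>(2) by (auto simp: simple_graph_def)
  ultimately show ?thesis using v(1) by (auto simp: BijGroup_one_apply)
qed

theorem theorem5p1:
  fixes V :: "'a set" and E :: "'a \<Rightarrow> 'a \<Rightarrow> bool"
    and z :: "'a \<Rightarrow> real" and k m :: nat
    and Cs Ds :: "nat \<Rightarrow> nat \<Rightarrow> 'a"
    and \<Gamma> :: "('a \<Rightarrow> 'a) set"
    and w :: "nat \<Rightarrow> 'a" and \<gamma>1 \<delta>1 :: "'a \<Rightarrow> 'a"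
  assumes graph: "simple_graph V E"
    and cub: "cubic V E"
    and vt: "vertex_transitive V E"
    and simple: "simple_eigenvalue V E 1"
    and z_eig: "z \<in> eigenspace V E 1"
    and z_pm: "\<forall>x\<in>V. z x = 1 \<or> z x = -1"
    and m_pos: "0 < m"
    and Cs: "induced_cycle_union V E {x \<in> V. z x = 1} k m Cs"
    and Ds: "induced_cycle_union V E {x \<in> V. z x = -1} k m Ds"
    and \<Gamma>_sub: "subgroup \<Gamma> (BijGroup V)"
    and \<Gamma>_aut: "\<forall>g\<in>\<Gamma>. graph_aut V E g"
    and \<Gamma>_trans: "acts_transitively_on \<Gamma> V"
    and A1: "acts_regularly_on V (set_stabilizer \<Gamma> (Cs 0 ` {..<k})) (Cs 0 ` {..<k})"
    and w_cyc: "is_cycle V E k w"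
    and w_D: "\<exists>i<m. w ` {..<k} = Ds i ` {..<k}"
    and w_adj: "E (Cs 0 0) (w 0)"
    and \<gamma>1: "\<gamma>1 \<in> \<Gamma>" "\<forall>j<k. \<gamma>1 (Cs 0 j) = Cs 0 (Suc j mod k)"
    and \<delta>1: "\<delta>1 \<in> \<Gamma>" "\<forall>j<k. \<delta>1 (Cs 0 j) = w j"
  shows "acts_regularly_on V \<Gamma> V
    \<and> \<delta>1 \<otimes>\<^bsub>BijGroup V\<^esub> \<delta>1 = \<one>\<^bsub>BijGroup V\<^esub> \<and> \<delta>1 \<noteq> \<one>\<^bsub>BijGroup V\<^esub>
    \<and> is_cayley_graph_of V E
        ((BijGroup V)\<lparr>carrier := generate (BijGroup V) {\<gamma>1, \<delta>1}\<rparr>)"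
proof -
  let ?G = "BijGroup V"
  define v where "v = Cs 0 0"
  have C0: "is_cycle V E k (Cs 0)" using Cs m_pos by (simp add: induced_cycle_union_def)
  then have k: "0 < k" by (simp add: is_cycle_def)
  have C0_pos: "Cs 0 ` {..<k} \<subseteq> {x \<in> V. z x = 1}" by (rule induced_cycle_union_subset[OF Cs m_pos])
  then have v: "v \<in> V" "z v = 1" using k unfolding v_def by auto
  obtain i where "i < m" "w 0 \<in> Ds i ` {..<k}" using w_D k by blast
  then have w0: "w 0 \<in> V" "z (w 0) = -1" using induced_cycle_union_subset[OF Ds] by blast+
  have stab: "\<And>g. g \<in> \<Gamma> \<Longrightarrow> g v = v \<Longrightarrow> g = \<one>\<^bsub>?G\<^esub>"
    using point_stabilizer_trivial[OF simple z_eig Cs m_pos \<Gamma>_aut A1] unfolding v_def by blast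
  have \<delta>v: "\<delta>1 v = w 0" using \<delta>1(2) k unfolding v_def by simp
  have involution: "\<delta>1 \<otimes>\<^bsub>?G\<^esub> \<delta>1 = \<one>\<^bsub>?G\<^esub> \<and> \<delta>1 \<noteq> \<one>\<^bsub>?G\<^esub>"
    using sign_reversing_aut_involution[OF cub graph simple z_eig z_pm \<Gamma>_sub \<Gamma>_aut v stab \<delta>1(1)]
      \<delta>v w_adj w0 unfolding v_def by simp
  define H where "H = generate ?G {\<gamma>1, \<delta>1}"
  have gens: "{\<gamma>1, \<delta>1} \<subseteq> carrier ?G" using subgroup.subset[OF \<Gamma>_sub] \<gamma>1(1) \<delta>1(1) by auto
  have H: "subgroup H ?G" "H \<subseteq> \<Gamma>" "\<gamma>1 \<in> H" "\<delta>1 \<in> H"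
    unfolding H_def using group.generate_is_subgroup[OF group_BijGroup gens]
      group.generate_subgroup_incl[OF group_BijGroup _ \<Gamma>_sub] \<gamma>1(1) \<delta>1(1)
    by (auto intro: generate.incl)
  have "w 0 \<notin> Cs 0 ` {..<k}" using w0 C0_pos by force
  then have "nbrs V E v \<subseteq> (\<lambda>h. h v) ` H"
    using nbrs_cycle_start_subset_orbit[OF cub graph C0 w_adj _ H(1) H(3) \<gamma>1(2) H(4)] \<delta>v
    unfolding v_def by simp
  then have orbit: "(\<lambda>h. h v) ` H = V"
    using simple_eigenvalue_orbit_eq_vertices[OF simple graph z_eig _ H(1) _ v(1)] z_pm H(2) \<Gamma>_aut
    by force
  have "is_cayley_graph_of V E (?G\<lparr>carrier := H\<rparr>)"
    using is_cayley_graph_of_regular_subgroup[OF H(1) _ graph v(1) orbit] H(2) \<Gamma>_aut stab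
    by (simp add: subset_iff)
  then show ?thesis
    using acts_regularly_of_trivial_stabilizer[OF \<Gamma>_sub \<Gamma>_trans v(1) stab] involution
    unfolding H_def by simp
qed

end
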